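(* Let $n\ge2$, $A=\{a_1,\dots,a_k\}$ finite and $u_1,\dots,u_n:A\to\mathbb{R}$. In every subgame-perfect Nash equilibrium of the $P^{n-1}\&C$ game, each player $j\in\{2,\dots,n\}$ obtains payoff $\mathrm{Avg}_j$, and player 1 obtains payoff $\max(u)-\sum_{j=2}^n\mathrm{Avg}_j$.
   Context: Players have quasi-linear utilities $u_i(a)+t_i$. $\mathrm{Avg}_j=\frac1k\sum_{l=1}^k u_j(a_l)$ and $\max(u)=\max_{a\in A}\sum_{i=1}^n u_i(a)$. Let $P=\{p\in\mathbb{R}^k:\sum_j p_j=0\}$. The $P^{n-1}\&C$ game: player 1 chooses $p^2\in P$; then for $i=2,\dots,n-1$ in order, player $i$, having observed $p^2,\dots,p^i$, chooses $p^{i+1}\in P$; finally player $n$, having observed $p^2,\dots,p^n$, chooses an option $a\in A$. Payoffs: $g_1=u_1(a)+p^2(a)$; $g_m=u_m(a)-p^m(a)+p^{m+1}(a)$ for $2\le m\le n-1$; $g_n=u_n(a)-p^n(a)$. Pure strategies map histories to actions; a subgame-perfect Nash equilibrium is a profile inducing a Nash equilibrium in every subgame. *)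

theory Defs
  imports Complex_Main
begin

text \<open>Options are elements of a finite set A (the k options a_1..a_k, k = card A).
  A vector p in R^k is represented as a function A -> real (zero outside A).
  Players are numbered 1..n. A history observed by player i (1 <= i <= n)
  is the list [p^2, ..., p^i] of length i-1. Player i < n chooses p^(i+1);
  player n chooses an option.\<close>

definition Pset :: "'a set \<Rightarrow> ('a \<Rightarrow> real) set" where
  "Pset A = {p. (\<forall>x. x \<notin> A \<longrightarrow> p x = 0) \<and> sum p A = 0}"

definition valid_hist :: "'a set \<Rightarrow> nat \<Rightarrow> ('a \<Rightarrow> real) list \<Rightarrow> bool" where
  "valid_hist A l h \<longleftrightarrow> length h = l \<and> set h \<subseteq> Pset A"

definition valid_profile :: "'a set \<Rightarrow> nat \<Rightarrow> (nat \<Rightarrow> ('a \<Rightarrow> real) list \<Rightarrow> ('a \<Rightarrow> real))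
    \<Rightarrow> (('a \<Rightarrow> real) list \<Rightarrow> 'a) \<Rightarrow> bool" where
  "valid_profile A n s t \<longleftrightarrow>
     (\<forall>i\<in>{1..n-1}. \<forall>h. valid_hist A (i - 1) h \<longrightarrow> s i h \<in> Pset A) \<and>
     (\<forall>h. valid_hist A (n - 1) h \<longrightarrow> t h \<in> A)"

fun extend :: "(nat \<Rightarrow> ('a \<Rightarrow> real) list \<Rightarrow> ('a \<Rightarrow> real)) \<Rightarrow> ('a \<Rightarrow> real) list \<Rightarrow> nat
    \<Rightarrow> ('a \<Rightarrow> real) list" where
  "extend s h 0 = h"
| "extend s h (Suc m) = (let h' = extend s h m in h' @ [s (length h' + 1) h'])"

definition final_hist :: "nat \<Rightarrow> (nat \<Rightarrow> ('a \<Rightarrow> real) list \<Rightarrow> ('a \<Rightarrow> real))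
    \<Rightarrow> ('a \<Rightarrow> real) list \<Rightarrow> ('a \<Rightarrow> real) list" where
  "final_hist n s h = extend s h (n - 1 - length h)"

definition outcome :: "nat \<Rightarrow> (nat \<Rightarrow> ('a \<Rightarrow> real) list \<Rightarrow> ('a \<Rightarrow> real))
    \<Rightarrow> (('a \<Rightarrow> real) list \<Rightarrow> 'a) \<Rightarrow> ('a \<Rightarrow> real) list \<Rightarrow> 'a" where
  "outcome n s t h = t (final_hist n s h)"

definition price :: "nat \<Rightarrow> ('a \<Rightarrow> real) list \<Rightarrow> nat \<Rightarrow> ('a \<Rightarrow> real)" where
  "price n hp m = (if 2 \<le> m \<and> m \<le> n then hp ! (m - 2) else (\<lambda>_. 0))"

text \<open>g_1 = u_1 a + p^2 a; g_m = u_m a - p^m a + p^(m+1) a; g_n = u_n a - p^n a.\<close>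
definition payoff :: "(nat \<Rightarrow> 'a \<Rightarrow> real) \<Rightarrow> nat \<Rightarrow> ('a \<Rightarrow> real) list \<Rightarrow> 'a \<Rightarrow> nat \<Rightarrow> real" where
  "payoff u n hp a m = u m a - price n hp m a + price n hp (Suc m) a"

definition game_payoff :: "(nat \<Rightarrow> 'a \<Rightarrow> real) \<Rightarrow> nat \<Rightarrow> (nat \<Rightarrow> ('a \<Rightarrow> real) list \<Rightarrow> ('a \<Rightarrow> real))
    \<Rightarrow> (('a \<Rightarrow> real) list \<Rightarrow> 'a) \<Rightarrow> ('a \<Rightarrow> real) list \<Rightarrow> nat \<Rightarrow> real" where
  "game_payoff u n s t h m = payoff u n (final_hist n s h) (outcome n s t h) m"

definition SPNE :: "'a set \<Rightarrow> (nat \<Rightarrow> 'a \<Rightarrow> real) \<Rightarrow> nat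
    \<Rightarrow> (nat \<Rightarrow> ('a \<Rightarrow> real) list \<Rightarrow> ('a \<Rightarrow> real)) \<Rightarrow> (('a \<Rightarrow> real) list \<Rightarrow> 'a) \<Rightarrow> bool" where
  "SPNE A u n s t \<longleftrightarrow> valid_profile A n s t \<and>
     (\<forall>l h. l \<le> n - 1 \<longrightarrow> valid_hist A l h \<longrightarrow>
        (\<forall>i\<in>{1..n-1}. \<forall>s'. valid_profile A n (s(i := s')) t \<longrightarrow>
            game_payoff u n (s(i := s')) t h i \<le> game_payoff u n s t h i) \<and>
        (\<forall>t'. valid_profile A n s t' \<longrightarrow>
            game_payoff u n s t' h n \<le> game_payoff u n s t h n))"

definition Avg :: "(nat \<Rightarrow> 'a \<Rightarrow> real) \<Rightarrow> 'a set \<Rightarrow> nat \<Rightarrow> real" where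
  "Avg u A j = (\<Sum>a\<in>A. u j a) / real (card A)"

definition maxu :: "(nat \<Rightarrow> 'a \<Rightarrow> real) \<Rightarrow> nat \<Rightarrow> 'a set \<Rightarrow> real" where
  "maxu u n A = Max ((\<lambda>a. \<Sum>i=1..n. u i a) ` A)"

end

theory Submission
  imports Defs
begin

text \<open>Player \<open>m\<close> (the one who pays \<open>p\<^sup>m\<close> and posts \<open>p\<^sup>m\<^sup>+\<^sup>1\<close>) faces the
  residual welfare \<open>W\<^sub>m(b) = u\<^sub>m(b) + \<dots> + u\<^sub>n(b) - p\<^sup>m(b)\<close>, and in equilibrium the option
  chosen maximises \<open>W\<^sub>m\<close>. Since \<open>W\<^sub>m(b) = u\<^sub>m(b) - p\<^sup>m(b) + W\<^sub>m\<^sub>+\<^sub>1(b)\<close>, player \<open>m\<close>'s payoff is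
  \<open>W\<^sub>m(a) - max W\<^sub>m\<^sub>+\<^sub>1\<close>. As prices sum to zero, \<open>max W\<^sub>m\<^sub>+\<^sub>1\<close> is at least the mean of
  \<open>u\<^sub>m\<^sub>+\<^sub>1 + \<dots> + u\<^sub>n\<close>, i.e. \<open>Avg\<^sub>m\<^sub>+\<^sub>1 + \<dots> + Avg\<^sub>n\<close>, so player \<open>m\<close> gets at most
  \<open>max W\<^sub>m - (Avg\<^sub>m\<^sub>+\<^sub>1 + \<dots> + Avg\<^sub>n)\<close>; conversely, a price that makes \<open>W\<^sub>m\<^sub>+\<^sub>1\<close> nearly constant
  with a slight peak at a maximiser of \<open>W\<^sub>m\<close> gets arbitrarily close to that bound. Hence
  equality holds, which forces \<open>max W\<^sub>m\<^sub>+\<^sub>1\<close> to equal the mean, and thus player \<open>m+1\<close> gets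
  exactly \<open>Avg\<^sub>m\<^sub>+\<^sub>1\<close>. At the root \<open>W\<^sub>1 = u\<^sub>1 + \<dots> + u\<^sub>n\<close>.\<close>

lemma extend_eq_append: "\<exists>r. extend s h k = h @ r \<and> length r = k"
proof (induction k)
  case 0
  then show ?case by simp
next
  case (Suc k)
  then obtain r where "extend s h k = h @ r" "length r = k" by blast
  then show ?case by (auto simp: Let_def)
qed

lemma extend_Suc_shift: "extend s h (Suc k) = extend s (h @ [s (Suc (length h)) h]) k"
  by (induction k) (simp_all add: Let_def)

lemma extend_fun_upd_past: "m \<le> length h \<Longrightarrow> extend (s(m := s')) h k = extend s h k"
proof (induction k)
  case 0
  then show ?case by simp
next
  case (Suc k)
  obtain r where "extend s h k = h @ r" using extend_eq_append by blast
  with Suc show ?case by (simp add: Let_def)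
qed

lemma final_hist_eq_append:
  "length h \<le> n - 1 \<Longrightarrow> \<exists>r. final_hist n s h = h @ r"
  unfolding final_hist_def using extend_eq_append by metis

lemma final_hist_step:
  "length h < n - 1 \<Longrightarrow> final_hist n s h = final_hist n s (h @ [s (Suc (length h)) h])"
proof -
  assume "length h < n - 1"
  then have "n - 1 - length h = Suc (n - 1 - length (h @ [s (Suc (length h)) h]))" by simp
  then show ?thesis unfolding final_hist_def by (simp only: extend_Suc_shift)
qed

lemma final_hist_deviation:
  assumes "length h < n - 1"
  shows "final_hist n (s(Suc (length h) := (s (Suc (length h)))(h := q))) h = final_hist n s (h @ [q])"
proof -
  let ?s = "s(Suc (length h) := (s (Suc (length h)))(h := q))"
  have "final_hist n ?s h = final_hist n ?s (h @ [q])"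
    using final_hist_step[OF assms, of ?s] by simp
  also have "\<dots> = final_hist n s (h @ [q])"
    unfolding final_hist_def by (rule extend_fun_upd_past) simp
  finally show ?thesis .
qed

definition last_price :: "('a \<Rightarrow> real) list \<Rightarrow> 'a \<Rightarrow> real" where
  "last_price h = (if h = [] then (\<lambda>_. 0) else last h)"

lemma price_last_price:
  "length h < n \<Longrightarrow> price n (h @ r) (Suc (length h)) = last_price h"
  unfolding price_def last_price_def by (cases h rule: rev_cases) (auto simp: nth_append)

lemma price_next: "length h < n - 1 \<Longrightarrow> price n (h @ q # r) (Suc (Suc (length h))) = q"
  unfolding price_def by (auto simp: nth_append)

definition tail_welfare :: "(nat \<Rightarrow> 'a \<Rightarrow> real) \<Rightarrow> nat \<Rightarrow> nat \<Rightarrow> 'a \<Rightarrow> real" where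
  "tail_welfare u n m b = (\<Sum>i=m..n. u i b)"

definition residual_welfare :: "(nat \<Rightarrow> 'a \<Rightarrow> real) \<Rightarrow> nat \<Rightarrow> ('a \<Rightarrow> real) list \<Rightarrow> 'a \<Rightarrow> real" where
  "residual_welfare u n h b = tail_welfare u n (Suc (length h)) b - last_price h b"

lemma residual_welfare_Nil: "residual_welfare u n [] b = (\<Sum>i=1..n. u i b)"
  by (simp add: residual_welfare_def tail_welfare_def last_price_def)

lemma residual_welfare_snoc:
  "residual_welfare u n (h @ [q]) b = tail_welfare u n (Suc (Suc (length h))) b - q b"
  by (simp add: residual_welfare_def last_price_def)

lemma payoff_mover:
  assumes "length h < n - 1"
  shows "payoff u n (final_hist n s (h @ [q])) b (Suc (length h))
       = residual_welfare u n h b - residual_welfare u n (h @ [q]) b"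
proof -
  obtain r where r: "final_hist n s (h @ [q]) = h @ q # r"
    using final_hist_eq_append[of "h @ [q]" n s] assms by auto
  have "tail_welfare u n (Suc (length h)) b = u (Suc (length h)) b + tail_welfare u n (Suc (Suc (length h))) b"
    using assms unfolding tail_welfare_def by (simp add: sum.atLeast_Suc_atMost)
  then show ?thesis
    using assms price_last_price[of h n "q # r"] price_next[of h n q r]
    unfolding r payoff_def residual_welfare_snoc by (simp add: residual_welfare_def)
qed

lemma payoff_last_mover:
  assumes "n \<ge> 2" and "length h = n - 1"
  shows "payoff u n h b n = residual_welfare u n h b"
  using assms price_last_price[of h n "[]"]
  by (simp add: payoff_def residual_welfare_def tail_welfare_def price_def)

lemma mean_le_Max:
  fixes f :: "'a \<Rightarrow> real"
  assumes "finite A" and "A \<noteq> {}"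
  shows "sum f A / card A \<le> Max (f ` A)"
proof -
  have "sum f A \<le> card A * Max (f ` A)"
    using sum_bounded_above[of A f "Max (f ` A)"] assms by simp
  then show ?thesis using assms by (simp add: divide_le_eq card_gt_0_iff mult.commute)
qed

lemma sum_diff_Pset: "q \<in> Pset A \<Longrightarrow> (\<Sum>b\<in>A. g b - q b) = sum g A"
  by (simp add: Pset_def sum_subtractf)

text \<open>A price flattening \<open>g\<close> to its mean, except for a peak of height \<open>e\<close> at \<open>a\<close>
  (compensated by \<open>e / card A\<close> everywhere).\<close>
lemma Pset_peak:
  fixes g :: "'a \<Rightarrow> real"
  assumes "finite A" and "a \<in> A" and "e > 0"
  shows "\<exists>q\<in>Pset A. (\<forall>b\<in>A - {a}. g b - q b < g a - q a) \<and> g a - q a \<le> sum g A / card A + e"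
proof -
  define k where "k = real (card A)"
  have k: "k > 0" using assms by (auto simp: k_def card_gt_0_iff)
  define q where "q b = (if b \<in> A then g b - sum g A / k - (if b = a then e else 0) + e / k else 0)" for b
  have "sum q A = sum g A - k * (sum g A / k) - (\<Sum>b\<in>A. if b = a then e else 0) + k * (e / k)"
    using assms(1) unfolding q_def k_def by (simp add: sum.distrib sum_subtractf)
  also have "\<dots> = 0" using assms k by simp
  finally have "q \<in> Pset A" by (simp add: Pset_def q_def)
  moreover have "g a - q a \<le> sum g A / card A + e" using assms k by (simp add: q_def k_def)
  moreover have "g b - q b < g a - q a" if "b \<in> A - {a}" for b
    using that assms by (simp add: q_def)
  ultimately show ?thesis by blast
qed

lemma sum_Avg: "finite A \<Longrightarrow> (\<Sum>i=m..n. Avg u A i) = (\<Sum>b\<in>A. tail_welfare u n m b) / card A"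
  unfolding Avg_def tail_welfare_def by (simp add: sum_divide_distrib[symmetric] sum.swap[of _ A])

lemma SPNE_price_deviation:
  assumes "SPNE A u n s t" and "length h \<le> n - 1" and "valid_hist A (length h) h"
    and "i \<in> {1..n-1}" and "valid_profile A n (s(i := s')) t"
  shows "game_payoff u n (s(i := s')) t h i \<le> game_payoff u n s t h i"
  using assms unfolding SPNE_def by blast

lemma SPNE_option_deviation:
  assumes "SPNE A u n s t" and "valid_hist A (n - 1) h" and "valid_profile A n s t'"
  shows "game_payoff u n s t' h n \<le> game_payoff u n s t h n"
  using assms unfolding SPNE_def by blast

definition subgame_solution ::
    "'a set \<Rightarrow> (nat \<Rightarrow> 'a \<Rightarrow> real) \<Rightarrow> nat \<Rightarrow> (nat \<Rightarrow> ('a \<Rightarrow> real) list \<Rightarrow> ('a \<Rightarrow> real))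
     \<Rightarrow> (('a \<Rightarrow> real) list \<Rightarrow> 'a) \<Rightarrow> ('a \<Rightarrow> real) list \<Rightarrow> bool" where
  "subgame_solution A u n s t h \<longleftrightarrow>
     outcome n s t h \<in> A \<and>
     residual_welfare u n h (outcome n s t h) = Max (residual_welfare u n h ` A) \<and>
     game_payoff u n s t h (Suc (length h))
       = Max (residual_welfare u n h ` A) - (\<Sum>i=Suc (Suc (length h))..n. Avg u A i) \<and>
     (\<forall>j\<in>{Suc (Suc (length h))..n}. game_payoff u n s t h j = Avg u A j)"

lemma subgame_solution_terminal:
  assumes "n \<ge> 2" and "finite A" and "SPNE A u n s t" and "valid_hist A (n - 1) h"
  shows "subgame_solution A u n s t h"
proof -
  have len: "length h = n - 1" using assms(4) by (simp add: valid_hist_def)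
  then have outcome: "outcome n s t' h = t' h" for t'
    by (simp add: outcome_def final_hist_def)
  have gp: "game_payoff u n s t' h n = residual_welfare u n h (t' h)" for t'
    using payoff_last_mover[OF assms(1) len]
    by (simp add: game_payoff_def outcome len final_hist_def)
  have vp: "valid_profile A n s t" using assms(3) by (simp add: SPNE_def)
  then have tA: "t h \<in> A" using assms(4) by (simp add: valid_profile_def)
  have "residual_welfare u n h b \<le> residual_welfare u n h (t h)" if "b \<in> A" for b
  proof -
    have "valid_profile A n s (t(h := b))" using vp that by (auto simp: valid_profile_def)
    from SPNE_option_deviation[OF assms(3,4) this] show ?thesis by (simp add: gp)
  qed
  then have "residual_welfare u n h (t h) = Max (residual_welfare u n h ` A)"
    using assms(2) tA by (intro Max_eqI[symmetric]) auto
  then show ?thesis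
    using tA gp[of t] len assms(1) by (simp add: subgame_solution_def outcome)
qed

lemma mover_payoff_ge:
  assumes "SPNE A u n s t" and "finite A" and "A \<noteq> {}"
    and "length h < n - 1" and "valid_hist A (length h) h"
    and succ: "\<And>q. q \<in> Pset A \<Longrightarrow> subgame_solution A u n s t (h @ [q])"
  shows "Max (residual_welfare u n h ` A) - (\<Sum>i=Suc (Suc (length h))..n. Avg u A i)
           \<le> game_payoff u n s t h (Suc (length h))"
proof (rule field_le_epsilon)
  fix e :: real
  assume "e > 0"
  let ?m = "Suc (length h)" and ?W = "residual_welfare u n"
  let ?C = "\<Sum>i=Suc ?m..n. Avg u A i"
  have "Max (?W h ` A) \<in> ?W h ` A" using assms(2,3) by simp
  then obtain a where aA: "a \<in> A" and a_max: "?W h a = Max (?W h ` A)" by auto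
  obtain q where qP: "q \<in> Pset A"
    and peak: "\<forall>b\<in>A - {a}. ?W (h @ [q]) b < ?W (h @ [q]) a"
    and low: "?W (h @ [q]) a \<le> ?C + e"
    using Pset_peak[OF assms(2) aA \<open>e > 0\<close>, of "tail_welfare u n (Suc ?m)"]
    by (auto simp: residual_welfare_snoc sum_Avg[OF assms(2)])
  have sol: "subgame_solution A u n s t (h @ [q])" using succ[OF qP] .
  have "outcome n s t (h @ [q]) = a"
  proof (rule ccontr)
    assume ne: "outcome n s t (h @ [q]) \<noteq> a"
    let ?b = "outcome n s t (h @ [q])"
    have "?b \<in> A" and b_max: "?W (h @ [q]) ?b = Max (?W (h @ [q]) ` A)"
      using sol by (simp_all add: subgame_solution_def)
    then have "?W (h @ [q]) ?b < ?W (h @ [q]) a" using ne peak by blast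
    moreover have "?W (h @ [q]) a \<le> Max (?W (h @ [q]) ` A)" using assms(2) aA by simp
    ultimately show False using b_max by linarith
  qed
  then have "game_payoff u n (s(?m := (s ?m)(h := q))) t h ?m = ?W h a - ?W (h @ [q]) a"
    by (simp add: game_payoff_def outcome_def final_hist_deviation[OF assms(4)]
        payoff_mover[OF assms(4)])
  moreover have "game_payoff u n (s(?m := (s ?m)(h := q))) t h ?m \<le> game_payoff u n s t h ?m"
  proof (rule SPNE_price_deviation[OF assms(1) _ assms(5)])
    have "valid_profile A n s t" using assms(1) by (simp add: SPNE_def)
    then show "valid_profile A n (s(?m := (s ?m)(h := q))) t"
      using qP by (auto simp: valid_profile_def)
  qed (use assms(4) in auto)
  ultimately show "Max (?W h ` A) - ?C \<le> game_payoff u n s t h ?m + e"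
    using a_max low by linarith
qed

lemma subgame_solution_step:
  assumes "SPNE A u n s t" and "finite A" and "A \<noteq> {}"
    and len: "length h < n - 1" and "valid_hist A (length h) h"
    and succ: "\<And>q. q \<in> Pset A \<Longrightarrow> subgame_solution A u n s t (h @ [q])"
  shows "subgame_solution A u n s t h"
proof -
  let ?m = "Suc (length h)" and ?W = "residual_welfare u n"
  let ?C = "\<Sum>i=Suc ?m..n. Avg u A i"
  define q where "q = s ?m h"
  have "valid_profile A n s t" using assms(1) by (simp add: SPNE_def)
  then have qP: "q \<in> Pset A" using len assms(5) by (simp add: valid_profile_def q_def)
  have sol: "subgame_solution A u n s t (h @ [q])" using succ[OF qP] .
  have cont: "final_hist n s h = final_hist n s (h @ [q])"
    using final_hist_step[OF len] by (simp add: q_def)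
  then have same_outcome: "outcome n s t h = outcome n s t (h @ [q])"
    and same_payoff: "game_payoff u n s t h = game_payoff u n s t (h @ [q])"
    by (simp_all add: outcome_def game_payoff_def fun_eq_iff)
  define a where "a = outcome n s t h"
  have aA: "a \<in> A" and succ_max: "?W (h @ [q]) a = Max (?W (h @ [q]) ` A)"
    using sol by (simp_all add: subgame_solution_def a_def same_outcome)
  have mean_le: "?C \<le> ?W (h @ [q]) a"
    using mean_le_Max[OF assms(2,3), of "?W (h @ [q])"] succ_max qP
    by (simp add: sum_Avg[OF assms(2)] residual_welfare_snoc sum_diff_Pset)
  have W_le: "?W h a \<le> Max (?W h ` A)" using assms(2) aA by simp
  have mover: "game_payoff u n s t h ?m = ?W h a - ?W (h @ [q]) a"
    by (simp add: game_payoff_def a_def cont same_outcome payoff_mover[OF len])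
  have "Max (?W h ` A) - ?C \<le> game_payoff u n s t h ?m"
    using mover_payoff_ge[OF assms] .
  then have a_max: "?W h a = Max (?W h ` A)" and succ_mean: "Max (?W (h @ [q]) ` A) = ?C"
    using mover mean_le W_le succ_max by linarith+
  have "game_payoff u n s t h (Suc ?m) = Avg u A (Suc ?m)"
    using sol len succ_mean by (simp add: subgame_solution_def same_payoff sum.atLeast_Suc_atMost)
  moreover have "\<forall>j\<in>{Suc (Suc ?m)..n}. game_payoff u n s t h j = Avg u A j"
    using sol by (simp add: subgame_solution_def same_payoff)
  ultimately have "\<forall>j\<in>{Suc ?m..n}. game_payoff u n s t h j = Avg u A j"
    by (metis atLeastAtMost_iff le_antisym not_less_eq_eq)
  then show ?thesis
    using aA a_max mover succ_max succ_mean by (simp add: subgame_solution_def a_def)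
qed

lemma subgame_solution_all:
  assumes "n \<ge> 2" and "finite A" and "A \<noteq> {}" and "SPNE A u n s t"
  shows "d \<le> n - 1 \<Longrightarrow> valid_hist A (n - 1 - d) h \<Longrightarrow> subgame_solution A u n s t h"
proof (induction d arbitrary: h)
  case 0
  then show ?case using subgame_solution_terminal[OF assms(1,2,4)] by simp
next
  case (Suc d)
  then have len: "length h = n - 1 - Suc d" and hP: "set h \<subseteq> Pset A"
    by (simp_all add: valid_hist_def)
  have "subgame_solution A u n s t (h @ [q])" if "q \<in> Pset A" for q
    using Suc.IH[of "h @ [q]"] Suc.prems(1) len hP that by (simp add: valid_hist_def)
  moreover have "length h < n - 1" using len Suc.prems(1) by simp
  ultimately show ?case
    using subgame_solution_step[OF assms(4,2,3)] hP by (simp add: valid_hist_def)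
qed

theorem mainTheorem7:
  fixes A :: "'a set" and u :: "nat \<Rightarrow> 'a \<Rightarrow> real" and n :: nat
    and s :: "nat \<Rightarrow> ('a \<Rightarrow> real) list \<Rightarrow> ('a \<Rightarrow> real)"
    and t :: "('a \<Rightarrow> real) list \<Rightarrow> 'a"
  assumes "n \<ge> 2" and "finite A" and "A \<noteq> {}"
    and "SPNE A u n s t"
  shows "(\<forall>j\<in>{2..n}. game_payoff u n s t [] j = Avg u A j) \<and>
         game_payoff u n s t [] 1 = maxu u n A - (\<Sum>j=2..n. Avg u A j)"
proof -
  have "subgame_solution A u n s t []"
    using subgame_solution_all[OF assms, of "n - 1" "[]"] by (simp add: valid_hist_def)
  then show ?thesis
    by (simp add: subgame_solution_def maxu_def residual_welfare_Nil numeral_2_eq_2)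
qed

end
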